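(* Let $\lambda\mapsto|\psi_\lambda\rangle\in\mathbb{C}^N$ be a twice continuously differentiable curve of unit vectors, and let $\rho_\lambda=|\psi_\lambda\rangle\langle\psi_\lambda|$. At a fixed $\lambda$ put $|0\rangle=|\psi_\lambda\rangle$, $|v\rangle=\partial_\lambda|\psi_\lambda\rangle$ and $|v^\perp\rangle=|v\rangle-\langle 0|v\rangle|0\rangle$, and assume $|v^\perp\rangle\neq0$. Let $\mathcal{B}^\lambda_\alpha$ be any orthonormal basis of $\mathbb{C}^N$ that contains the two vectors $|\pm\rangle=\frac{1}{\sqrt2}\big(|0\rangle\pm|v^\perp\rangle/\langle v^\perp|v^\perp\rangle^{1/2}\big)$. Equivalently, $\mathcal{B}^\lambda_\alpha$ is any orthonormal eigenbasis of the SLD $L_\lambda=2(|v\rangle\langle0|+|0\rangle\langle v|)$. Then $$-\Big[\partial^2_{\delta\lambda}\,\mathrm{Coh}_{\mathcal{B}^\lambda_\alpha}(\rho_{\lambda+\delta\lambda})\Big]_{\delta\lambda=0}=4g^{FS}_\lambda.$$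
   Context: All logarithms are natural logarithms. For an orthonormal basis $\mathcal{B}=\{|x\rangle\}$, the relative entropy of coherence of $\mathcal{B}$ with respect to $\rho$ is $\mathrm{Coh}_{\mathcal{B}}(\rho)=-\mathcal{V}(\rho)+H(p)$. Here $p_x=\langle x|\rho|x\rangle$, $\mathcal{V}$ is the von Neumann entropy and $H$ is the Shannon entropy. The Fubini–Study metric is $g^{FS}_\lambda=\langle v|v\rangle-|\langle v|0\rangle|^2=\langle v^\perp|v^\perp\rangle$. Equivalently, $4g^{FS}_\lambda$ equals the quantum Fisher information of the pure-state family at $\lambda$. *)

theory Defs
  imports "HOL-Analysis.Analysis"
begin

text \<open>Vectors of C^N are modelled as complex ^ 'n with N = CARD('n).
  Hermitian inner product, conjugate-linear in the first argument (bra-ket).\<close>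
definition cinner :: "complex ^ 'n \<Rightarrow> complex ^ 'n \<Rightarrow> complex" where
  "cinner x y = (\<Sum>i\<in>UNIV. cnj (x $ i) * y $ i)"

text \<open>Orthonormal family indexed by 'n (N vectors in C^N: an orthonormal basis).\<close>
definition orthonormal_basis :: "('n \<Rightarrow> complex ^ 'n) \<Rightarrow> bool" where
  "orthonormal_basis e \<longleftrightarrow> (\<forall>i j. cinner (e i) (e j) = (if i = j then 1 else 0))"

definition proj :: "complex ^ 'n \<Rightarrow> complex ^ 'n ^ 'n" where
  "proj \<psi> = (\<chi> i j. \<psi> $ i * cnj (\<psi> $ j))"

text \<open>Shannon-type entropy term  -x ln x  (equal to 0 at x = 0).\<close>
definition entr :: "real \<Rightarrow> real" where
  "entr x = - x * ln x"

definition vn_entropy :: "complex ^ 'n ^ 'n \<Rightarrow> real" where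
  "vn_entropy \<rho> = (THE s. \<exists>e \<mu>. orthonormal_basis e \<and>
      (\<forall>i. \<rho> *v e i = complex_of_real (\<mu> i) *s e i) \<and> s = (\<Sum>i\<in>UNIV. entr (\<mu> i)))"

definition shannon_in_basis :: "('n \<Rightarrow> complex ^ 'n) \<Rightarrow> complex ^ 'n ^ 'n \<Rightarrow> real" where
  "shannon_in_basis b \<rho> = (\<Sum>i\<in>UNIV. entr (Re (cinner (b i) (\<rho> *v b i))))"

definition coh :: "('n \<Rightarrow> complex ^ 'n) \<Rightarrow> complex ^ 'n ^ 'n \<Rightarrow> real" where
  "coh b \<rho> = - vn_entropy \<rho> + shannon_in_basis b \<rho>"

definition fubini_study :: "complex ^ 'n \<Rightarrow> complex ^ 'n \<Rightarrow> real" where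
  "fubini_study \<psi>0 v = Re (cinner v v) - (cmod (cinner v \<psi>0))\<^sup>2"

end

theory Submission
  imports Defs "HOL-Real_Asymp.Real_Asymp"
begin

text \<open>
  For a pure state the von Neumann entropy vanishes, so along the curve the coherence is the
  Shannon entropy \<open>\<Sum>\<^sub>k entr |z\<^sub>k(t)|\<^sup>2\<close> of the coordinates
  \<open>z\<^sub>k(t) = \<langle>b\<^sub>k|\<psi>\<^sub>t\<rangle>\<close>.
  Each term \<open>entr |z|\<^sup>2\<close> is differentiable even where \<open>z\<close> vanishes, because
  \<open>|z|\<^sup>2 ln |z|\<^sup>2 = o(|z|)\<close>; the same estimate shows that its derivative is again
  differentiable at \<open>\<lambda>\<close> whenever \<open>z\<close> and \<open>z'\<close> vanish together there, which is the case for
  every basis vector orthogonal to \<open>|\<plusminus>\<rangle>\<close>.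
  In the two remaining coordinates \<open>z = 1/\<surd>2\<close> and \<open>z' = (a \<plusminus> |v\<^sup>\<perp>|)/\<surd>2\<close> with
  \<open>a = \<langle>0|v\<rangle>\<close> imaginary; differentiating the normalisation twice gives
  \<open>\<langle>v|v\<rangle> + Re \<langle>0|\<psi>''\<rangle> = 0\<close>, which cancels all logarithmic terms and leaves
  \<open>-2 |v\<^sup>\<perp>|\<^sup>2\<close> from each of them.
\<close>

lemma cinner_add_right: "cinner x (y + z) = cinner x y + cinner x z"
  by (simp add: cinner_def distrib_left sum.distrib)
lemma cinner_add_left: "cinner (x + y) z = cinner x z + cinner y z"
  by (simp add: cinner_def distrib_right sum.distrib)
lemma cinner_diff_right: "cinner x (y - z) = cinner x y - cinner x z"
  by (simp add: cinner_def right_diff_distrib sum_subtractf)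
lemma cinner_diff_left: "cinner (x - y) z = cinner x z - cinner y z"
  by (simp add: cinner_def left_diff_distrib sum_subtractf)
lemma cinner_scaleC_right: "cinner x (c *s y) = c * cinner x y"
  by (simp add: cinner_def sum_distrib_left mult.left_commute)
lemma cinner_scaleC_left: "cinner (c *s x) y = cnj c * cinner x y"
  by (simp add: cinner_def sum_distrib_left mult.assoc)
lemma cinner_scaleR_right: "cinner x (r *\<^sub>R y) = of_real r * cinner x y"
  by (simp add: cinner_def sum_distrib_left) (simp add: scaleR_conv_of_real mult.left_commute)
lemma cinner_scaleR_left: "cinner (r *\<^sub>R x) y = of_real r * cinner x y"
  by (simp add: cinner_def sum_distrib_left) (simp add: scaleR_conv_of_real mult.assoc)
lemma cinner_zero_left [simp]: "cinner 0 x = 0"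
  by (simp add: cinner_def)
lemma cnj_cinner: "cnj (cinner x y) = cinner y x"
  by (simp add: cinner_def mult.commute)

lemma Re_cinner: "Re (cinner x y) = inner x y"
  by (simp add: cinner_def inner_vec_def inner_complex_def Re_sum)

lemma cinner_self: "cinner x x = of_real ((norm x)\<^sup>2)"
proof -
  have "Im (cinner x x) = 0"
    by (simp add: cinner_def Im_sum)
  then show ?thesis
    by (simp add: complex_eq_iff Re_cinner power2_norm_eq_inner)
qed

lemma cinner_self_eq_1: "cinner x x = 1 \<longleftrightarrow> norm x = 1"
  by (simp only: cinner_self of_real_eq_1_iff power2_eq_1_iff) (use norm_ge_zero[of x] in linarith)

lemma bounded_linear_cinner_right: "bounded_linear (cinner c)"
proof -
  have "linear (cinner c)"
    by (rule linearI) (simp_all add: cinner_add_right cinner_scaleR_right flip: scaleR_conv_of_real)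
  then show ?thesis
    using linear_conv_bounded_linear by blast
qed

lemma proj_mult_vec: "proj u *v x = cinner u x *s u"
  by (simp add: proj_def matrix_vector_mult_def cinner_def vec_eq_iff
      sum_distrib_left sum_distrib_right mult_ac)

lemma Re_cinner_proj_self: "Re (cinner x (proj u *v x)) = (norm (cinner x u))\<^sup>2"
proof -
  have "cinner x (proj u *v x) = cinner x u * cnj (cinner x u)"
    by (simp add: proj_mult_vec cinner_scaleC_right cnj_cinner mult.commute)
  then show ?thesis
    by (simp flip: complex_norm_square)
qed

lemma cinner_axis: "cinner (axis i 1) y = y $ i"
  by (simp add: cinner_def axis_def sum.remove[where x=i])

lemma orthonormal_basis_axis: "orthonormal_basis (\<lambda>i. axis i 1)"
  by (simp add: orthonormal_basis_def cinner_axis) (simp add: axis_def)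

definition householder :: "complex ^ 'n \<Rightarrow> complex ^ 'n \<Rightarrow> complex ^ 'n" where
  "householder w z = z - (2 * cinner w z / cinner w w) *s w"

lemma householder_cinner: "cinner (householder w p) (householder w q) = cinner p q"
proof (cases "w = 0")
  case False
  define k where "k = cinner w w"
  have "k \<noteq> 0"
    using False by (simp add: k_def cinner_self)
  moreover have "cnj k = k"
    by (simp add: k_def cnj_cinner)
  ultimately show ?thesis
    unfolding householder_def k_def[symmetric]
    by (simp add: cinner_diff_left cinner_diff_right cinner_scaleC_left cinner_scaleC_right
        flip: k_def cnj_cinner[of p w])
qed (simp add: householder_def)

lemma householder_swap:
  assumes "cinner x x = cinner y y" and "cinner x y = cinner y x"
  shows "householder (x - y) x = y"
proof (cases "x = y")
  case False
  have "cinner (x - y) (x - y) = 2 * cinner (x - y) x"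
    using assms by (simp add: cinner_diff_left cinner_diff_right)
  moreover have "cinner (x - y) (x - y) \<noteq> 0"
    using False by (simp add: cinner_self)
  ultimately show ?thesis
    by (simp add: householder_def)
qed (simp add: householder_def)

lemma proj_eigenvalue:
  assumes "cinner u u = 1" and "proj u *v x = \<mu> *s x" and "x \<noteq> 0"
  shows "\<mu> = 0 \<or> \<mu> = 1"
proof (cases "cinner u x = 0")
  case True
  then show ?thesis
    using assms(2,3) by (auto simp: proj_mult_vec vec_eq_iff)
next
  case False
  have "cinner u x = \<mu> * cinner u x"
    using arg_cong[OF assms(2), of "cinner u"] assms(1)
    by (simp add: proj_mult_vec cinner_scaleC_right)
  then show ?thesis
    using False by simp
qed

text \<open>A Householder reflection of the standard basis onto a phase multiple of \<open>u\<close>; the phase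
  makes \<open>\<langle>e\<^sub>i|y\<rangle>\<close> real, as \<open>householder_swap\<close> requires.\<close>

lemma proj_orthonormal_eigenbasis:
  fixes u :: "complex ^ 'n"
  assumes "cinner u u = 1"
  obtains e i where "orthonormal_basis e"
    and "\<And>k. proj u *v e k = of_real (if k = i then 1 else 0) *s e k"
proof -
  fix i :: 'n
  define c where "c = u $ i"
  define ph where "ph = (if c = 0 then 1 else cnj c / of_real (cmod c))"
  define y where "y = ph *s u"
  define e where "e k = householder (axis i 1 - y) (axis k 1)" for k
  have "cmod ph = 1"
    by (simp add: ph_def norm_divide)
  then have ph: "cnj ph * ph = 1"
    using complex_norm_square[of ph] by (simp add: mult.commute)
  have yy: "cinner y y = 1"
    using ph assms by (simp add: y_def cinner_scaleC_left cinner_scaleC_right mult.commute)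
  have "cinner (axis i 1) y = ph * c"
    by (simp add: y_def c_def cinner_axis)
  also have "\<dots> = of_real (cmod c)"
  proof (cases "c = 0")
    case False
    have "ph * c = (c * cnj c) / of_real (cmod c)"
      using False by (simp add: ph_def)
    also have "\<dots> = of_real (cmod c)"
      using False by (simp add: power2_eq_square flip: complex_norm_square)
    finally show ?thesis .
  qed (simp add: ph_def)
  finally have xy: "cinner (axis i 1) y = of_real (cmod c)" .
  moreover have "cinner y (axis i 1) = of_real (cmod c)"
    using xy cnj_cinner[of "axis i 1" y] by simp
  moreover have "cinner (axis i 1) (axis i 1) = 1"
    by (simp add: cinner_axis)
  ultimately have ei: "e i = y"
    unfolding e_def by (intro householder_swap) (simp_all add: yy)
  have onb: "orthonormal_basis e"
    using orthonormal_basis_axis by (simp add: orthonormal_basis_def e_def householder_cinner)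
  have "proj u *v e k = of_real (if k = i then 1 else 0) *s e k" for k
  proof (cases "k = i")
    case True
    then show ?thesis
      using ei assms by (simp add: y_def proj_mult_vec cinner_scaleC_right)
  next
    case False
    then have "cinner y (e k) = 0"
      using onb ei by (metis orthonormal_basis_def)
    then have "cinner u (e k) = 0"
      using ph by (auto simp: y_def cinner_scaleC_left)
    then show ?thesis
      using False by (simp add: proj_mult_vec)
  qed
  then show ?thesis
    using onb that by blast
qed

lemma vn_entropy_proj:
  assumes "cinner u u = 1"
  shows "vn_entropy (proj u) = 0"
  unfolding vn_entropy_def
proof (rule the_equality)
  obtain e i where "orthonormal_basis e"
    and "\<And>k. proj u *v e k = of_real (if k = i then 1 else 0) *s e k"
    using proj_orthonormal_eigenbasis assms by blast
  then show "\<exists>e \<mu>. orthonormal_basis e \<and> (\<forall>i. proj u *v e i = of_real (\<mu> i) *s e i)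
      \<and> 0 = (\<Sum>i\<in>UNIV. entr (\<mu> i))"
    by (intro exI conjI) (auto simp: entr_def intro!: sum.neutral)
next
  fix s
  assume "\<exists>e \<mu>. orthonormal_basis e \<and> (\<forall>i. proj u *v e i = of_real (\<mu> i) *s e i)
      \<and> s = (\<Sum>i\<in>UNIV. entr (\<mu> i))"
  then obtain e \<mu> where onb: "orthonormal_basis e"
    and eig: "\<And>i. proj u *v e i = of_real (\<mu> i) *s e i" and s: "s = (\<Sum>i\<in>UNIV. entr (\<mu> i))"
    by blast
  have "e i \<noteq> 0" for i
    using onb by (metis cinner_zero_left one_neq_zero orthonormal_basis_def)
  then have "\<mu> i = 0 \<or> \<mu> i = 1" for i
    using proj_eigenvalue[OF assms eig] by (metis of_real_eq_0_iff of_real_eq_1_iff)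
  then have "entr (\<mu> i) = 0" for i
    by (metis entr_def ln_one minus_zero mult_zero_left mult_zero_right)
  then show "s = 0"
    by (simp add: s)
qed

lemma coh_proj:
  assumes "cinner u u = 1"
  shows "coh b (proj u) = (\<Sum>k\<in>UNIV. entr ((norm (cinner (b k) u))\<^sup>2))"
  by (simp add: coh_def shannon_in_basis_def vn_entropy_proj[OF assms] Re_cinner_proj_self)

lemma has_real_derivative_inner [derivative_intros]:
  assumes "(f has_vector_derivative f') (at x within S)"
    and "(g has_vector_derivative g') (at x within S)"
  shows "((\<lambda>s. inner (f s) (g s)) has_real_derivative inner (f x) g' + inner f' (g x)) (at x within S)"
  using bounded_bilinear.has_vector_derivative[OF bounded_bilinear_inner assms]
  by (simp add: has_real_derivative_iff_has_vector_derivative)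

lemma has_real_derivative_power2_norm:
  assumes "(f has_vector_derivative f') (at x within S)"
  shows "((\<lambda>s. (norm (f s))\<^sup>2) has_real_derivative 2 * inner (f x) f') (at x within S)"
  using has_real_derivative_inner[OF assms assms]
  by (simp add: power2_norm_eq_inner inner_commute)

lemma tendsto_norm_mult_ln_power2_norm:
  assumes "(f \<longlongrightarrow> 0) F"
  shows "((\<lambda>s. norm (f s) * (\<bar>ln ((norm (f s))\<^sup>2)\<bar> + 1)) \<longlongrightarrow> 0) F"
proof -
  have "((\<lambda>r::real. r * (\<bar>ln (r\<^sup>2)\<bar> + 1)) \<longlongrightarrow> 0) (at_right 0)"
  proof (rule Lim_transform_eventually)
    show "((\<lambda>r::real. r * (1 - 2 * ln r)) \<longlongrightarrow> 0) (at_right 0)"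
      by real_asymp
    have "eventually (\<lambda>r::real. 0 < r \<and> r < 1) (at_right 0)"
      unfolding eventually_at_right[OF zero_less_one] by (intro exI[of _ 1]) simp
    then show "\<forall>\<^sub>F r in at_right 0. r * (1 - 2 * ln r) = r * (\<bar>ln (r\<^sup>2)\<bar> + 1 :: real)"
      by eventually_elim (simp add: ln_realpow)
  qed
  then have "continuous (at 0 within {0..}) (\<lambda>r::real. r * (\<bar>ln (r\<^sup>2)\<bar> + 1))"
    by (simp add: continuous_within at_within_Ici_at_right)
  from continuous_within_tendsto_compose[OF this _ tendsto_norm_zero[OF assms]]
  show ?thesis
    by simp
qed

lemma has_real_derivative_zero_if_dominated:
  fixes g :: "real \<Rightarrow> 'a::real_normed_vector"
  assumes "f t = 0" and "g t = 0" and "(g has_vector_derivative g') (at t)"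
    and "(\<phi> \<longlongrightarrow> 0) (at t)" and "\<And>s. \<bar>f s\<bar> \<le> \<phi> s * norm (g s)"
  shows "(f has_real_derivative 0) (at t)"
proof -
  define r where "r = (\<lambda>s. norm (g s - g t - (s - t) *\<^sub>R g') / \<bar>s - t\<bar>)"
  have "(r \<longlongrightarrow> 0) (at t)"
    using assms(3) by (simp add: has_vector_derivative_def has_derivative_iff_norm r_def)
  then have "((\<lambda>s. \<bar>\<phi> s\<bar> * (r s + norm g')) \<longlongrightarrow> 0 * (0 + norm g')) (at t)"
    by (intro tendsto_mult tendsto_add tendsto_const tendsto_rabs_zero assms(4))
  then have lim: "((\<lambda>s. \<bar>\<phi> s\<bar> * (r s + norm g')) \<longlongrightarrow> 0) (at t)"
    by simp
  have "norm (f s / (s - t)) \<le> \<bar>\<phi> s\<bar> * (r s + norm g')" for s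
  proof (cases "s = t")
    case False
    have "norm (g s) \<le> norm (g s - g t - (s - t) *\<^sub>R g') + \<bar>s - t\<bar> * norm g'"
      using assms(2) norm_triangle_ineq[of "g s - (s - t) *\<^sub>R g'" "(s - t) *\<^sub>R g'"] by simp
    moreover have "\<bar>s - t\<bar> * (r s + norm g')
        = norm (g s - g t - (s - t) *\<^sub>R g') + \<bar>s - t\<bar> * norm g'"
      using False by (simp add: r_def distrib_left)
    ultimately have g_bound: "norm (g s) \<le> \<bar>s - t\<bar> * (r s + norm g')"
      by linarith
    have "\<bar>f s\<bar> \<le> \<bar>\<phi> s\<bar> * norm (g s)"
      using assms(5)[of s] mult_right_mono[OF abs_ge_self norm_ge_zero] by (rule order_trans)
    also have "\<dots> \<le> \<bar>\<phi> s\<bar> * (\<bar>s - t\<bar> * (r s + norm g'))"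
      using g_bound by (rule mult_left_mono) simp
    finally show ?thesis
      using False by (simp add: abs_divide divide_le_eq mult_ac)
  qed (simp add: r_def)
  then have "((\<lambda>s. (f s - f t) / (s - t)) \<longlongrightarrow> 0) (at t)"
    using assms(1) by (intro Lim_null_comparison[OF _ lim] always_eventually) simp
  then show ?thesis
    by (simp add: has_field_derivative_iff)
qed

text \<open>First and second derivative of \<open>t \<mapsto> entr \<parallel>z t\<parallel>\<^sup>2\<close> at a point where
  \<open>z\<close>, \<open>z'\<close>, \<open>z''\<close> take the values \<open>x\<close>, \<open>x'\<close>, \<open>x''\<close>.  At \<open>x = 0\<close> the junk values
  \<open>ln 0 = 0\<close> and \<open>c / 0 = 0\<close> make both vanish (the second one only if also \<open>x' = 0\<close>),
  which is the correct derivative there.\<close>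

definition entr_norm2_deriv :: "'a::real_inner \<Rightarrow> 'a \<Rightarrow> real" where
  "entr_norm2_deriv x x' = - (ln ((norm x)\<^sup>2) + 1) * (2 * inner x x')"

definition entr_norm2_deriv2 :: "'a::real_inner \<Rightarrow> 'a \<Rightarrow> 'a \<Rightarrow> real" where
  "entr_norm2_deriv2 x x' x'' =
    - (2 * inner x x')\<^sup>2 / (norm x)\<^sup>2 - (ln ((norm x)\<^sup>2) + 1) * (2 * ((norm x')\<^sup>2 + inner x x''))"

lemma has_real_derivative_entr_norm2:
  assumes "(z has_vector_derivative z') (at t)"
  shows "((\<lambda>s. entr ((norm (z s))\<^sup>2)) has_real_derivative entr_norm2_deriv (z t) z') (at t)"
proof (cases "z t = 0")
  case True
  have "(z \<longlongrightarrow> 0) (at t)"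
    using has_vector_derivative_continuous[OF assms] True by (simp add: continuous_at)
  then have "((\<lambda>s. norm (z s) * (\<bar>ln ((norm (z s))\<^sup>2)\<bar> + 1)) \<longlongrightarrow> 0) (at t)"
    by (rule tendsto_norm_mult_ln_power2_norm)
  moreover have "\<bar>entr ((norm (z s))\<^sup>2)\<bar> \<le> norm (z s) * (\<bar>ln ((norm (z s))\<^sup>2)\<bar> + 1) * norm (z s)" for s
    by (simp add: entr_def abs_mult power2_eq_square algebra_simps)
  ultimately have "((\<lambda>s. entr ((norm (z s))\<^sup>2)) has_real_derivative 0) (at t)"
    using True assms by (intro has_real_derivative_zero_if_dominated[where g = z]) (simp_all add: entr_def)
  then show ?thesis
    using True by (simp add: entr_norm2_deriv_def)
next
  case False
  define n where "n s = (norm (z s))\<^sup>2" for s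
  have "0 < n t"
    using False by (simp add: n_def)
  moreover have "(n has_real_derivative 2 * inner (z t) z') (at t)"
    unfolding n_def[abs_def] using assms by (rule has_real_derivative_power2_norm)
  ultimately have "((\<lambda>s. entr (n s)) has_real_derivative - (ln (n t) + 1) * (2 * inner (z t) z')) (at t)"
    unfolding entr_def by (auto intro!: derivative_eq_intros simp: field_simps)
  then show ?thesis
    by (simp add: n_def entr_norm2_deriv_def)
qed

lemma has_real_derivative_entr_norm2_deriv:
  assumes "(z has_vector_derivative z' t) (at t)" and "(z' has_vector_derivative z'') (at t)"
    and "z t = 0 \<Longrightarrow> z' t = 0"
  shows "((\<lambda>s. entr_norm2_deriv (z s) (z' s)) has_real_derivative entr_norm2_deriv2 (z t) (z' t) z'') (at t)"
proof (cases "z t = 0")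
  case True
  have "(z \<longlongrightarrow> 0) (at t)"
    using has_vector_derivative_continuous[OF assms(1)] True by (simp add: continuous_at)
  then have "((\<lambda>s. 2 * (norm (z s) * (\<bar>ln ((norm (z s))\<^sup>2)\<bar> + 1))) \<longlongrightarrow> 0) (at t)"
    by (intro tendsto_mult_right_zero tendsto_norm_mult_ln_power2_norm)
  moreover have "\<bar>entr_norm2_deriv (z s) (z' s)\<bar>
      \<le> 2 * (norm (z s) * (\<bar>ln ((norm (z s))\<^sup>2)\<bar> + 1)) * norm (z' s)" for s
  proof -
    have "\<bar>entr_norm2_deriv (z s) (z' s)\<bar>
        = \<bar>ln ((norm (z s))\<^sup>2) + 1\<bar> * (2 * \<bar>inner (z s) (z' s)\<bar>)"
      unfolding entr_norm2_deriv_def abs_mult abs_minus_cancel by simp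
    also have "\<dots> \<le> (\<bar>ln ((norm (z s))\<^sup>2)\<bar> + 1) * (2 * (norm (z s) * norm (z' s)))"
      by (intro mult_mono) (simp_all add: Cauchy_Schwarz_ineq2)
    finally show ?thesis
      by (simp add: mult_ac)
  qed
  ultimately have "((\<lambda>s. entr_norm2_deriv (z s) (z' s)) has_real_derivative 0) (at t)"
    using True assms by (intro has_real_derivative_zero_if_dominated[where g = z'])
      (simp_all add: entr_norm2_deriv_def)
  then show ?thesis
    using True assms(3) by (simp add: entr_norm2_deriv2_def)
next
  case False
  define n where "n s = (norm (z s))\<^sup>2" for s
  have "0 < n t"
    using False by (simp add: n_def)
  moreover have "(n has_real_derivative 2 * inner (z t) (z' t)) (at t)"
    unfolding n_def[abs_def] using assms(1) by (rule has_real_derivative_power2_norm)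
  ultimately have "((\<lambda>s. - (ln (n s) + 1) * (2 * inner (z s) (z' s))) has_real_derivative
      - (2 * inner (z t) (z' t))\<^sup>2 / n t
        - (ln (n t) + 1) * (2 * (inner (z' t) (z' t) + inner (z t) z''))) (at t)"
    by (auto intro!: derivative_eq_intros assms(1,2) simp: field_simps power2_eq_square inner_commute)
  then show ?thesis
    by (simp add: n_def entr_norm2_deriv_def entr_norm2_deriv2_def power2_norm_eq_inner)
qed

lemma inner_eq_0_if_norm_const:
  assumes "(f has_vector_derivative f') (at t)" and "\<And>s. norm (f s) = r"
  shows "inner (f t) f' = 0"
proof -
  have "((\<lambda>s. (norm (f s))\<^sup>2) has_real_derivative 0) (at t)"
    using assms(2) by simp
  from DERIV_unique[OF has_real_derivative_power2_norm[OF assms(1)] this]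
  show ?thesis
    by simp
qed

lemma norm_const_second_derivative:
  assumes "\<And>s. (f has_vector_derivative f' s) (at s)" and "(f' has_vector_derivative f'') (at t)"
    and "\<And>s. norm (f s) = r"
  shows "(norm (f' t))\<^sup>2 + inner (f t) f'' = 0"
proof -
  have "((\<lambda>s. inner (f s) (f' s)) has_real_derivative 0) (at t)"
    using inner_eq_0_if_norm_const[OF assms(1,3)] by simp
  from DERIV_unique[OF has_real_derivative_inner[OF assms(1,2)] this]
  show ?thesis
    by (simp add: power2_norm_eq_inner inner_commute)
qed

lemma has_vector_derivative_cinner_right:
  "(f has_vector_derivative f') F \<Longrightarrow> ((\<lambda>s. cinner c (f s)) has_vector_derivative cinner c f') F"
  by (rule bounded_linear.has_vector_derivative[OF bounded_linear_cinner_right])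

lemma coh_proj_has_real_derivative:
  assumes "(\<psi> has_vector_derivative v) (at t)" and "\<And>s. cinner (\<psi> s) (\<psi> s) = 1"
  shows "((\<lambda>s. coh b (proj (\<psi> s))) has_real_derivative
      (\<Sum>k\<in>UNIV. entr_norm2_deriv (cinner (b k) (\<psi> t)) (cinner (b k) v))) (at t)"
  unfolding coh_proj[OF assms(2)]
  by (intro DERIV_sum has_real_derivative_entr_norm2 has_vector_derivative_cinner_right assms(1))

lemma sum_entr_norm2_deriv_has_real_derivative:
  assumes "(\<psi> has_vector_derivative \<psi>' t) (at t)" and "(\<psi>' has_vector_derivative \<psi>'') (at t)"
    and "\<And>k. cinner (b k) (\<psi> t) = 0 \<Longrightarrow> cinner (b k) (\<psi>' t) = 0"
  shows "((\<lambda>s. \<Sum>k\<in>UNIV. entr_norm2_deriv (cinner (b k) (\<psi> s)) (cinner (b k) (\<psi>' s)))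
      has_real_derivative
      (\<Sum>k\<in>UNIV. entr_norm2_deriv2 (cinner (b k) (\<psi> t)) (cinner (b k) (\<psi>' t)) (cinner (b k) \<psi>''))) (at t)"
  by (intro DERIV_sum has_real_derivative_entr_norm2_deriv has_vector_derivative_cinner_right assms)

lemma entr_norm2_deriv2_conjugate_pair:
  fixes a p q :: complex and n :: real
  assumes "Re a = 0"
  defines "s \<equiv> 1 / sqrt 2"
  shows "entr_norm2_deriv2 (of_real s) (of_real s * (a + of_real n)) p
      + entr_norm2_deriv2 (of_real s) (of_real s * (a - of_real n)) q
    = - 4 * n\<^sup>2 + 2 * (ln 2 - 1) * ((cmod a)\<^sup>2 + n\<^sup>2 + s * Re (p + q))"
proof -
  have s2: "s\<^sup>2 = 1 / 2"
    by (simp add: s_def power_divide)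
  have "ln (s\<^sup>2) = - ln 2"
    by (simp add: s2 ln_div)
  moreover have "(cmod (of_real s * (a + of_real n)))\<^sup>2 = s\<^sup>2 * ((cmod a)\<^sup>2 + n\<^sup>2)"
    and "(cmod (of_real s * (a - of_real n)))\<^sup>2 = s\<^sup>2 * ((cmod a)\<^sup>2 + n\<^sup>2)"
    using assms(1) by (simp_all add: norm_mult power_mult_distrib cmod_power2)
  moreover have "inner (of_real s) (of_real s * (a + of_real n)) = s\<^sup>2 * n"
    and "inner (of_real s) (of_real s * (a - of_real n)) = - s\<^sup>2 * n"
    and "inner (of_real s) p = s * Re p" and "inner (of_real s) q = s * Re q"
    using assms(1) by (simp_all add: inner_complex_def power2_eq_square)
  moreover have "(norm (of_real s :: complex))\<^sup>2 = s\<^sup>2"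
    by simp
  ultimately show ?thesis
    unfolding entr_norm2_deriv2_def by (simp only: s2) (simp add: field_simps power2_eq_square)
qed

lemma orthogonal_to_plus_minus_pair:
  assumes "orthonormal_basis b" and "b i = c *\<^sub>R (u + d *\<^sub>R w)" and "b j = c *\<^sub>R (u - d *\<^sub>R w)"
    and "c \<noteq> 0" and "d \<noteq> 0" and "k \<noteq> i" and "k \<noteq> j"
  shows "cinner (b k) u = 0" and "cinner (b k) w = 0"
proof -
  have "cinner (b k) (b i) = 0" and "cinner (b k) (b j) = 0"
    using assms(1,6,7) by (simp_all add: orthonormal_basis_def)
  then have "cinner (b k) u + of_real d * cinner (b k) w = 0"
    and "cinner (b k) u - of_real d * cinner (b k) w = 0"
    using assms(2-4)
    by (simp_all add: cinner_add_right cinner_diff_right cinner_scaleR_right)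
  then show "cinner (b k) u = 0" and "cinner (b k) w = 0"
    using assms(5) by (simp_all add: algebra_simps)
qed

lemma sum_entr_norm2_deriv2_plus_minus_basis:
  fixes u v x :: "complex ^ 'n" and b :: "'n \<Rightarrow> complex ^ 'n"
  defines "w \<equiv> v - cinner u v *s u"
  assumes onb: "orthonormal_basis b" and u: "norm u = 1" and "inner u v = 0"
    and "(norm v)\<^sup>2 + inner u x = 0" and "w \<noteq> 0"
    and bi: "b i = (1 / sqrt 2) *\<^sub>R (u + (1 / norm w) *\<^sub>R w)"
    and bj: "b j = (1 / sqrt 2) *\<^sub>R (u - (1 / norm w) *\<^sub>R w)"
  shows "(\<Sum>k\<in>UNIV. entr_norm2_deriv2 (cinner (b k) u) (cinner (b k) v) (cinner (b k) x))
      = - 4 * fubini_study u v"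
    and "cinner (b k) u = 0 \<Longrightarrow> cinner (b k) v = 0"
proof -
  define a where "a = cinner u v"
  define n where "n = norm w"
  define s where "s = 1 / sqrt 2"
  have v: "v = w + a *s u"
    by (simp add: w_def a_def)
  have n: "n > 0"
    using \<open>w \<noteq> 0\<close> by (simp add: n_def)
  have uu: "cinner u u = 1"
    using u by (simp add: cinner_self)
  have uw: "cinner u w = 0" and wu: "cinner w u = 0"
    using uu by (simp_all add: w_def a_def cinner_diff_left cinner_diff_right cinner_scaleC_left
        cinner_scaleC_right cnj_cinner)
  have ww: "cinner w w = of_real (n\<^sup>2)"
    by (simp add: n_def cinner_self)
  have Re_a: "Re a = 0"
    using \<open>inner u v = 0\<close> by (simp add: a_def Re_cinner)
  have "cinner (b i) w = of_real (s * n)" and "cinner (b j) w = - of_real (s * n)"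
    using uw ww n by (simp_all add: bi bj s_def n_def cinner_add_left cinner_diff_left
        cinner_scaleR_left power2_eq_square)
  then have i_ne_j: "i \<noteq> j"
    using n by (auto simp: s_def)
  have bi_u: "cinner (b i) u = of_real s" and bj_u: "cinner (b j) u = of_real s"
    using uu wu by (simp_all add: bi bj s_def cinner_add_left cinner_diff_left cinner_scaleR_left)
  have bi_v: "cinner (b i) v = of_real s * (a + of_real n)"
    and bj_v: "cinner (b j) v = of_real s * (a - of_real n)"
    using uu uw wu n ww unfolding v
    by (simp_all add: bi bj s_def n_def cinner_add_left cinner_diff_left cinner_add_right
        cinner_scaleR_left cinner_scaleC_right power2_eq_square field_simps)
  have s: "s \<noteq> 0" "2 * s\<^sup>2 = 1"
    by (simp_all add: s_def power_divide)
  have other: "cinner (b k) u = 0 \<and> cinner (b k) v = 0" if "k \<noteq> i" "k \<noteq> j" for k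
    using orthogonal_to_plus_minus_pair[OF onb bi bj _ _ that] n
    by (simp add: v n_def cinner_add_right cinner_scaleC_right)
  then show "cinner (b k) u = 0 \<Longrightarrow> cinner (b k) v = 0"
    using bi_u bj_u s by (cases "k = i \<or> k = j") auto
  have "cinner (b i) x + cinner (b j) x = of_real (2 * s) * cinner u x"
    by (simp add: bi bj s_def cinner_add_left cinner_diff_left cinner_scaleR_left field_simps)
  then have pq: "s * Re (cinner (b i) x + cinner (b j) x) = inner u x"
    using s by (simp add: Re_cinner power2_eq_square mult.assoc[symmetric])
  have "cinner v v = cinner w w + cnj a * a"
    using uu uw wu unfolding v
    by (simp add: cinner_add_left cinner_add_right cinner_scaleC_left cinner_scaleC_right)
  then have "Re (cinner v v) = Re (cinner w w) + Re (cnj a * a)"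
    by simp
  then have norm_v: "(norm v)\<^sup>2 = (cmod a)\<^sup>2 + n\<^sup>2"
    by (simp only: Re_cinner n_def flip: power2_norm_eq_inner) (simp add: cmod_power2 flip: power2_eq_square)
  have "cinner v u = cnj a"
    by (simp add: a_def cnj_cinner)
  then have "fubini_study u v = n\<^sup>2"
    using norm_v by (simp add: fubini_study_def Re_cinner power2_norm_eq_inner)
  have "(\<Sum>k\<in>UNIV. entr_norm2_deriv2 (cinner (b k) u) (cinner (b k) v) (cinner (b k) x))
      = (\<Sum>k\<in>{i, j}. entr_norm2_deriv2 (cinner (b k) u) (cinner (b k) v) (cinner (b k) x))"
    by (rule sum.mono_neutral_right) (auto simp: other entr_norm2_deriv2_def)
  also have "\<dots> = - 4 * n\<^sup>2 + 2 * (ln 2 - 1) * ((cmod a)\<^sup>2 + n\<^sup>2 + inner u x)"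
    using i_ne_j entr_norm2_deriv2_conjugate_pair[OF Re_a, of n] bi_u bj_u bi_v bj_v pq
    by (simp add: s_def)
  finally show "(\<Sum>k\<in>UNIV. entr_norm2_deriv2 (cinner (b k) u) (cinner (b k) v) (cinner (b k) x))
      = - 4 * fubini_study u v"
    using norm_v \<open>(norm v)\<^sup>2 + inner u x = 0\<close> \<open>fubini_study u v = n\<^sup>2\<close> by simp
qed

theorem proposition2:
  fixes \<psi> \<psi>' \<psi>'' :: "real \<Rightarrow> complex ^ 'n"
    and l :: real
    and b :: "'n \<Rightarrow> complex ^ 'n"
  assumes d1: "\<And>t. (\<psi> has_vector_derivative \<psi>' t) (at t)"
      and d2: "\<And>t. (\<psi>' has_vector_derivative \<psi>'' t) (at t)"
      and cont2: "continuous_on UNIV \<psi>''"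
      and unit: "\<And>t. cinner (\<psi> t) (\<psi> t) = 1"
      and vperp_nz: "\<psi>' l - cinner (\<psi> l) (\<psi>' l) *s \<psi> l \<noteq> 0"
      and onb: "orthonormal_basis b"
      and plus: "\<exists>i. b i = (1 / sqrt 2) *\<^sub>R (\<psi> l + (1 / sqrt (Re (cinner
                    (\<psi>' l - cinner (\<psi> l) (\<psi>' l) *s \<psi> l)
                    (\<psi>' l - cinner (\<psi> l) (\<psi>' l) *s \<psi> l)))) *\<^sub>R
                    (\<psi>' l - cinner (\<psi> l) (\<psi>' l) *s \<psi> l))"
      and minus: "\<exists>j. b j = (1 / sqrt 2) *\<^sub>R (\<psi> l - (1 / sqrt (Re (cinner
                    (\<psi>' l - cinner (\<psi> l) (\<psi>' l) *s \<psi> l)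
                    (\<psi>' l - cinner (\<psi> l) (\<psi>' l) *s \<psi> l)))) *\<^sub>R
                    (\<psi>' l - cinner (\<psi> l) (\<psi>' l) *s \<psi> l))"
  shows "\<exists>D. (\<forall>\<^sub>F \<delta> in nhds 0.
              ((\<lambda>d. coh b (proj (\<psi> (l + d)))) has_real_derivative D \<delta>) (at \<delta>))
           \<and> (D has_real_derivative (- 4 * fubini_study (\<psi> l) (\<psi>' l))) (at 0)"
proof -
  define w where "w = \<psi>' l - cinner (\<psi> l) (\<psi>' l) *s \<psi> l"
  have "sqrt (Re (cinner w w)) = norm w"
    by (simp add: Re_cinner norm_eq_sqrt_inner)
  then obtain i j where bi: "b i = (1 / sqrt 2) *\<^sub>R (\<psi> l + (1 / norm w) *\<^sub>R w)"
    and bj: "b j = (1 / sqrt 2) *\<^sub>R (\<psi> l - (1 / norm w) *\<^sub>R w)"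
    using plus minus unfolding w_def[symmetric] by auto
  have norm_\<psi>: "norm (\<psi> s) = 1" for s
    using unit by (simp add: cinner_self_eq_1)
  note basis = sum_entr_norm2_deriv2_plus_minus_basis[OF onb norm_\<psi>
      inner_eq_0_if_norm_const[OF d1 norm_\<psi>] norm_const_second_derivative[OF d1 d2 norm_\<psi>]
      vperp_nz bi[unfolded w_def] bj[unfolded w_def]]
  define D where "D = (\<lambda>\<delta>. \<Sum>k\<in>UNIV.
    entr_norm2_deriv (cinner (b k) (\<psi> (l + \<delta>))) (cinner (b k) (\<psi>' (l + \<delta>))))"
  have "((\<lambda>d. coh b (proj (\<psi> (l + d)))) has_real_derivative D \<delta>) (at \<delta>)" for \<delta>
    using DERIV_shift[THEN iffD1, OF coh_proj_has_real_derivative[OF d1 unit, of b "\<delta> + l"]]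
    by (simp add: D_def add.commute)
  moreover have "(D has_real_derivative (- 4 * fubini_study (\<psi> l) (\<psi>' l))) (at 0)"
    using DERIV_shift[THEN iffD1, of _ _ 0 l,
        OF sum_entr_norm2_deriv_has_real_derivative[where b = b, OF d1 d2]] basis
    by (simp add: D_def add.commute)
  ultimately show ?thesis
    by (intro exI[of _ D] conjI always_eventually allI)
qed

end
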